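(* Let $\mathbb{L}/\mathbb{K}$ be a finite Galois extension of degree $N$ with Galois group $G=\{g_1,\dots,g_N\}$, $g_1=\mathrm{Id}$, and let $\alpha$ be a primitive element of $\mathbb{L}/\mathbb{K}$. Regard $\mathbb{L}\otimes_\mathbb{K}\mathbb{L}$ as an $\mathbb{L}$-vector space via the left factor, so that for any $\mathbb{K}$-linear $f:\mathbb{L}\to\mathbb{L}$ the map $\mathrm{Id}\otimes f$ is $\mathbb{L}$-linear. Let $m_\alpha:\mathbb{L}\to\mathbb{L}$, $x\mapsto\alpha x$, and choose a nonzero $v\in\mathbb{L}\otimes_\mathbb{K}\mathbb{L}$ with $(\mathrm{Id}\otimes m_\alpha)(v)=\alpha\cdot v$. For $g\in G$ set $v_g=(\mathrm{Id}\otimes g^{-1})(v)$. Then each $v_g$ is an eigenvector of $\mathrm{Id}\otimes m_\alpha$ with eigenvalue $g(\alpha)$, $(\mathrm{Id}\otimes g)(v_h)=v_{hg^{-1}}$ for all $g,h\in G$, $(v_{g_1},\dots,v_{g_N})$ is an $\mathbb{L}$-basis of $\mathbb{L}\otimes_\mathbb{K}\mathbb{L}$, and for every $a\in\mathbb{L}[G]$ the matrix of $\mathrm{Id}\otimes a$ in the basis $(v_{g_1},\dots,v_{g_N})$ equals $D_G(a)^\top$. Moreover, $D_G(a)$ is the matrix, in the $\mathbb{L}$-basis $(g_1,\dots,g_N)$ of $\mathbb{L}[G]$, of the $\mathbb{L}$-linear map $\mathbb{L}[G]\to\mathbb{L}[G]$, $f\mapsto f\circ a$.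
   Context: $\mathbb{L}[G]=\{\sum_ga_gg:a_g\in\mathbb{L}\}$ with composition product $(ag)\circ(bh)=(a\,g(b))(gh)$ extended by distributivity; $a=\sum a_gg$ acts on $\mathbb{L}$ as the $\mathbb{K}$-linear map $x\mapsto\sum a_gg(x)$. The $G$-Dickson matrix $D_G(a)$ has rows and columns indexed by $g_1,\dots,g_N$ and entries $D_G(a)_{g,h}=h(a_{h^{-1}g})$. Matrices of linear maps have as columns the coordinates of images of basis vectors. *)

theory Defs
  imports Main
begin

section \<open>Field extension L/K with L = UNIV :: 'a::field and K a subfield\<close>

definition subfield :: "'a::field set \<Rightarrow> bool" where
  "subfield K \<longleftrightarrow> 0 \<in> K \<and> 1 \<in> K \<and>
     (\<forall>x\<in>K. \<forall>y\<in>K. x + y \<in> K \<and> x * y \<in> K) \<and>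
     (\<forall>x\<in>K. - x \<in> K \<and> inverse x \<in> K)"

definition ext_degree :: "'a::field set \<Rightarrow> nat \<Rightarrow> bool" where
  "ext_degree K N \<longleftrightarrow> (\<exists>e::nat \<Rightarrow> 'a. \<forall>x. \<exists>!c::nat \<Rightarrow> 'a.
      (\<forall>i. (i < N \<longrightarrow> c i \<in> K) \<and> (N \<le> i \<longrightarrow> c i = 0)) \<and> x = (\<Sum>i<N. c i * e i))"

definition Gal :: "'a::field set \<Rightarrow> ('a \<Rightarrow> 'a) set" where
  "Gal K = {\<sigma>. bij \<sigma> \<and> (\<forall>x y. \<sigma> (x + y) = \<sigma> x + \<sigma> y \<and> \<sigma> (x * y) = \<sigma> x * \<sigma> y)
                 \<and> (\<forall>k\<in>K. \<sigma> k = k)}"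

definition galois_ext :: "'a::field set \<Rightarrow> nat \<Rightarrow> bool" where
  "galois_ext K N \<longleftrightarrow> subfield K \<and> ext_degree K N \<and> card (Gal K) = N"

definition primitive_element :: "'a::field set \<Rightarrow> 'a \<Rightarrow> bool" where
  "primitive_element K \<alpha> \<longleftrightarrow> (\<forall>F. subfield F \<and> K \<subseteq> F \<and> \<alpha> \<in> F \<longrightarrow> F = UNIV)"

text \<open>Construction: L \<otimes>_K L = (free L-module on symbols <y>, y in L) modulo the L-submodule
  generated by <y+y'> - <y> - <y'> and <k y> - k <y> (k in K).  A finitely supported
  c :: 'a \<Rightarrow> 'a represents \<Sum>_y c(y) \<otimes> y; L-scaling and addition are pointwise.\<close>

definition fsupp :: "('a \<Rightarrow> 'b::zero) \<Rightarrow> bool" where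
  "fsupp c \<longleftrightarrow> finite {y. c y \<noteq> 0}"

definition tb :: "'a::field \<Rightarrow> 'a \<Rightarrow> 'a" where
  "tb y = (\<lambda>z. if z = y then 1 else 0)"

inductive_set tzero :: "'a::field set \<Rightarrow> ('a \<Rightarrow> 'a) set" for K :: "'a set" where
  tz0: "(\<lambda>_. 0) \<in> tzero K"
| tz_add: "c \<in> tzero K \<Longrightarrow> d \<in> tzero K \<Longrightarrow> (\<lambda>z. c z + d z) \<in> tzero K"
| tz_smult: "c \<in> tzero K \<Longrightarrow> (\<lambda>z. a * c z) \<in> tzero K"
| tz_gen_add: "(\<lambda>z. tb (y + y') z - tb y z - tb y' z) \<in> tzero K"
| tz_gen_scal: "k \<in> K \<Longrightarrow> (\<lambda>z. tb (k * y) z - k * tb y z) \<in> tzero K"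

definition teq :: "'a::field set \<Rightarrow> ('a \<Rightarrow> 'a) \<Rightarrow> ('a \<Rightarrow> 'a) \<Rightarrow> bool" where
  "teq K c d \<longleftrightarrow> (\<lambda>z. c z - d z) \<in> tzero K"

text \<open>Id \<otimes> f on representatives: \<Sum>_y c(y) \<otimes> y \<mapsto> \<Sum>_y c(y) \<otimes> f(y).\<close>
definition idt :: "('a::field \<Rightarrow> 'a) \<Rightarrow> ('a \<Rightarrow> 'a) \<Rightarrow> ('a \<Rightarrow> 'a)" where
  "idt f c = (\<lambda>z. \<Sum>y\<in>{y. c y \<noteq> 0 \<and> f y = z}. c y)"

definition tlc :: "('g set) \<Rightarrow> ('g \<Rightarrow> 'a::field) \<Rightarrow> ('g \<Rightarrow> 'a \<Rightarrow> 'a) \<Rightarrow> ('a \<Rightarrow> 'a)" where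
  "tlc G c w = (\<lambda>z. \<Sum>g\<in>G. c g * w g z)"

definition grp_elem :: "('a \<Rightarrow> 'a) set \<Rightarrow> (('a \<Rightarrow> 'a) \<Rightarrow> 'a::field) \<Rightarrow> bool" where
  "grp_elem G a \<longleftrightarrow> (\<forall>g. g \<notin> G \<longrightarrow> a g = 0)"

definition gr_basis :: "('a \<Rightarrow> 'a) \<Rightarrow> (('a \<Rightarrow> 'a) \<Rightarrow> 'a::field)" where
  "gr_basis h = (\<lambda>k. if k = h then 1 else 0)"

text \<open>Composition product (a g) \<circ> (b h) = (a g(b)) (g h), extended by distributivity.\<close>
definition gr_mult :: "('a \<Rightarrow> 'a) set \<Rightarrow> (('a \<Rightarrow> 'a) \<Rightarrow> 'a::field) \<Rightarrow> (('a \<Rightarrow> 'a) \<Rightarrow> 'a) \<Rightarrow> (('a \<Rightarrow> 'a) \<Rightarrow> 'a)" where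
  "gr_mult G a b = (\<lambda>k. \<Sum>g\<in>G. \<Sum>h\<in>G. if g \<circ> h = k then a g * g (b h) else 0)"

definition gr_act :: "('a \<Rightarrow> 'a) set \<Rightarrow> (('a \<Rightarrow> 'a) \<Rightarrow> 'a::field) \<Rightarrow> 'a \<Rightarrow> 'a" where
  "gr_act G a = (\<lambda>x. \<Sum>g\<in>G. a g * g x)"

definition dickson :: "('a \<Rightarrow> 'a) set \<Rightarrow> (('a \<Rightarrow> 'a) \<Rightarrow> 'a::field) \<Rightarrow> ('a \<Rightarrow> 'a) \<Rightarrow> ('a \<Rightarrow> 'a) \<Rightarrow> 'a" where
  "dickson G a g h = h (a (inv h \<circ> g))"

end

theory Submission
  imports Defs "Jordan_Normal_Form.Determinant"
begin

text \<open>For \<open>h \<in> G\<close> the functional \<open>x \<otimes> y \<mapsto> x \<cdot> h(y)\<close> is well defined on \<open>L \<otimes>\<^sub>K L\<close>, and together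
  these \<open>N\<close> functionals identify \<open>L \<otimes>\<^sub>K L\<close> with \<open>L\<^sup>G\<close>: writing an element as \<open>\<Sum>\<^sub>i d\<^sub>i \<otimes> e\<^sub>i\<close> for a
  \<open>K\<close>-basis \<open>e\<close>, its coordinates are \<open>(\<Sum>\<^sub>i d\<^sub>i h(e\<^sub>i))\<^sub>h\<close>, and the square matrix \<open>(h(e\<^sub>i))\<close> is
  invertible by Dedekind's independence of characters.  In these coordinates \<open>Id \<otimes> f\<close>
  acts by \<open>h \<mapsto> h \<circ> f\<close>, so \<open>Id \<otimes> m\<^sub>\<alpha>\<close> is diagonal with entries \<open>h(\<alpha>)\<close>, which are pairwise
  distinct because \<open>\<alpha>\<close> is primitive.  Hence \<open>v\<close> has a single nonzero coordinate, at \<open>h = Id\<close>,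
  \<open>v\<^sub>g\<close> has a single nonzero coordinate, at \<open>h = g\<close>, and all claims become coordinate
  computations.\<close>

text \<open>Jordan_Normal_Form imports HOL-Algebra, whose group inverse syntax hides HOL's \<open>inv\<close>.\<close>
no_notation m_inv (\<open>(\<open>open_block notation=\<open>prefix inv\<close>\<close>inv\<index> _)\<close> [81] 80)

lemma square_matrix_kernel_trivial:
  fixes M :: "nat \<Rightarrow> nat \<Rightarrow> 'a::field"
  assumes rows: "\<And>l. \<forall>i<N. (\<Sum>j<N. l j * M j i) = 0 \<Longrightarrow> \<forall>j<N. l j = 0"
    and kernel: "\<forall>j<N. (\<Sum>i<N. M j i * d i) = 0"
  shows "\<forall>i<N. d i = 0"
proof (rule ccontr)
  assume nz: "\<not> (\<forall>i<N. d i = 0)"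
  define A where "A = mat N N (\<lambda>(j,i). M j i)"
  have A: "A \<in> carrier_mat N N" unfolding A_def by simp
  have "vec N d \<in> carrier_vec N" by simp
  moreover have "vec N d \<noteq> 0\<^sub>v N" using nz by (metis index_vec index_zero_vec(1))
  moreover have "A *\<^sub>v vec N d = 0\<^sub>v N"
    by (rule eq_vecI) (auto simp: A_def mult_mat_vec_def scalar_prod_def kernel atLeast0LessThan)
  ultimately have "det A = 0" using det_0_iff_vec_prod_zero_field[OF A] by blast
  then have "det (transpose_mat A) = 0" using det_transpose[OF A] by simp
  then obtain l where l: "l \<in> carrier_vec N" "l \<noteq> 0\<^sub>v N" "transpose_mat A *\<^sub>v l = 0\<^sub>v N"
    using det_0_iff_vec_prod_zero_field[of "transpose_mat A" N] A by auto
  have "\<forall>i<N. (\<Sum>j<N. l $ j * M j i) = 0"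
  proof (intro allI impI)
    fix i assume i: "i < N"
    have "(transpose_mat A *\<^sub>v l) $ i = 0" using l(3) i by simp
    then show "(\<Sum>j<N. l $ j * M j i) = 0" using i l(1)
      by (simp add: A_def mult_mat_vec_def scalar_prod_def atLeast0LessThan mult.commute)
  qed
  then have "l = 0\<^sub>v N" using rows l(1) by (intro eq_vecI) auto
  with l(2) show False ..
qed

section \<open>The Galois group\<close>

lemma Gal_bij: "h \<in> Gal K \<Longrightarrow> bij h"
  and Gal_add: "h \<in> Gal K \<Longrightarrow> h (x + y) = h x + h y"
  and Gal_mult: "h \<in> Gal K \<Longrightarrow> h (x * y) = h x * h y"
  and Gal_fixes: "h \<in> Gal K \<Longrightarrow> k \<in> K \<Longrightarrow> h k = k"
  unfolding Gal_def by auto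

lemma Gal_zero: "h \<in> Gal K \<Longrightarrow> h 0 = 0"
  using Gal_add[of h K 0 0] by (metis add_0 add_cancel_right_right)

lemma Gal_one:
  assumes "h \<in> Gal K" shows "h 1 = 1"
proof -
  obtain x where "h x = 1" using Gal_bij[OF assms] by (metis bij_is_surj surjD)
  then show ?thesis using Gal_mult[OF assms, of 1 x] by simp
qed

lemma Gal_uminus: "h \<in> Gal K \<Longrightarrow> h (- x) = - h x"
  using Gal_add[of h K x "- x"] Gal_zero[of h K] by (simp add: eq_neg_iff_add_eq_0 add.commute)

lemma Gal_inverse:
  assumes "h \<in> Gal K" shows "h (inverse x) = inverse (h x)"
proof (cases "x = 0")
  case True then show ?thesis using Gal_zero[OF assms] by simp
next
  case False
  then have "h x * h (inverse x) = 1" using Gal_mult[OF assms, of x "inverse x"] Gal_one[OF assms] by simp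
  then show ?thesis by (metis inverse_unique)
qed

lemma Gal_sum: "h \<in> Gal K \<Longrightarrow> h (\<Sum>i\<in>S. f i) = (\<Sum>i\<in>S. h (f i))"
  by (induction S rule: infinite_finite_induct) (simp_all add: Gal_zero Gal_add)

lemma id_in_Gal: "id \<in> Gal K"
  unfolding Gal_def by auto

lemma Gal_comp: "g \<in> Gal K \<Longrightarrow> h \<in> Gal K \<Longrightarrow> g \<circ> h \<in> Gal K"
  unfolding Gal_def by (auto intro: bij_comp)

lemma Gal_inv:
  assumes g: "g \<in> Gal K" shows "inv g \<in> Gal K"
proof -
  have "bij g" using Gal_bij[OF g] .
  then have inj: "inj g" and g_inv: "\<And>x. g (inv g x) = x"
    by (auto simp: bij_is_inj bij_is_surj surj_f_inv_f)
  show ?thesis unfolding Gal_def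
  proof (intro CollectI conjI allI ballI)
    show "bij (inv g)" using \<open>bij g\<close> by (rule bij_imp_bij_inv)
    fix x y
    show "inv g (x + y) = inv g x + inv g y"
      by (rule inj_onD[OF inj]) (simp_all add: g_inv Gal_add[OF g])
    show "inv g (x * y) = inv g x * inv g y"
      by (rule inj_onD[OF inj]) (simp_all add: g_inv Gal_mult[OF g])
  next
    fix k assume "k \<in> K"
    then show "inv g k = k" using Gal_fixes[OF g] inj by (metis inv_f_f)
  qed
qed

text \<open>The equalizer of \<open>g\<close> and \<open>g'\<close> is a subfield containing \<open>K\<close> and \<open>\<alpha>\<close>.\<close>
lemma Gal_eq_if_eq_on_primitive:
  assumes "g \<in> Gal K" "g' \<in> Gal K" "primitive_element K \<alpha>" "g \<alpha> = g' \<alpha>"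
  shows "g = g'"
proof -
  let ?F = "{x. g x = g' x}"
  have "subfield ?F" unfolding subfield_def
    using assms(1,2) by (auto simp: Gal_zero Gal_one Gal_add Gal_mult Gal_uminus Gal_inverse)
  moreover have "K \<subseteq> ?F" using Gal_fixes[OF assms(1)] Gal_fixes[OF assms(2)] by auto
  ultimately have "?F = UNIV" using assms(3,4) unfolding primitive_element_def by auto
  then show ?thesis by auto
qed

text \<open>Dedekind's lemma, by the usual minimal-relation argument: multiplying a relation by
  \<open>\<sigma>\<^sub>0(y)\<close> and subtracting it evaluated at \<open>y x\<close> yields a shorter relation.\<close>
lemma Gal_linear_independent:
  assumes "finite S" "inj_on \<sigma> S" "\<sigma> ` S \<subseteq> Gal K"
    and "\<And>x. (\<Sum>j\<in>S. l j * \<sigma> j x) = 0"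
  shows "\<forall>j\<in>S. l j = 0"
  using assms
proof (induction S arbitrary: l rule: finite_induct)
  case empty then show ?case by simp
next
  case (insert j0 S)
  have \<sigma>0: "\<sigma> j0 \<in> Gal K" and \<sigma>S: "\<And>j. j \<in> S \<Longrightarrow> \<sigma> j \<in> Gal K" using insert.prems by auto
  have rel: "(\<Sum>j\<in>S. l j * \<sigma> j x) = - (l j0 * \<sigma> j0 x)" for x
    using insert.prems(3)[of x] insert.hyps by (simp add: eq_neg_iff_add_eq_0 add.commute)
  have shorter: "\<forall>j\<in>S. l j * (\<sigma> j y - \<sigma> j0 y) = 0" for y
  proof (rule insert.IH)
    fix x
    have "(\<Sum>j\<in>S. l j * \<sigma> j (y * x)) = (\<Sum>j\<in>S. l j * \<sigma> j y * \<sigma> j x)"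
      by (intro sum.cong refl) (simp add: Gal_mult[OF \<sigma>S] mult.assoc)
    then have "(\<Sum>j\<in>S. l j * (\<sigma> j y - \<sigma> j0 y) * \<sigma> j x)
        = (\<Sum>j\<in>S. l j * \<sigma> j (y * x)) - \<sigma> j0 y * (\<Sum>j\<in>S. l j * \<sigma> j x)"
      by (simp add: algebra_simps sum_subtractf sum_distrib_left)
    also have "\<dots> = \<sigma> j0 y * (l j0 * \<sigma> j0 x) - l j0 * \<sigma> j0 (y * x)"
      by (simp add: rel)
    also have "\<dots> = 0" by (simp add: Gal_mult[OF \<sigma>0])
    finally show "(\<Sum>j\<in>S. l j * (\<sigma> j y - \<sigma> j0 y) * \<sigma> j x) = 0" .
  qed (use insert.prems in auto)
  have lS: "\<forall>j\<in>S. l j = 0"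
  proof
    fix j assume j: "j \<in> S"
    then have "\<sigma> j \<noteq> \<sigma> j0" using insert.prems(1) insert.hyps by (metis inj_onD insertI1 insertI2)
    then obtain y where "\<sigma> j y \<noteq> \<sigma> j0 y" by auto
    then show "l j = 0" using shorter[of y] j by auto
  qed
  then have "l j0 = 0" using rel[of 1] Gal_one[OF \<sigma>0] by simp
  with lS show ?case by auto
qed

lemma comp_eq_iff_eq_inv_comp:
  assumes "bij k" shows "k \<circ> g = h \<longleftrightarrow> g = inv k \<circ> h"
proof
  assume "k \<circ> g = h"
  then show "g = inv k \<circ> h" using bij_is_inj[OF assms] by (auto simp: o_assoc[symmetric])
next
  assume "g = inv k \<circ> h"
  then show "k \<circ> g = h" using bij_is_surj[OF assms] by (simp add: o_assoc surj_iff)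
qed

lemma comp_inv_eq_id_iff: "bij g \<Longrightarrow> h \<circ> inv g = id \<longleftrightarrow> h = g"
  by (metis bij_is_inj bij_is_surj id_comp o_inv_o_cancel surj_iff)

section \<open>Coordinates of \<open>L \<otimes>\<^sub>K L\<close>\<close>

text \<open>The functional \<open>x \<otimes> y \<mapsto> x \<cdot> h(y)\<close>, evaluated on the representative \<open>\<Sum>\<^sub>y c(y) \<otimes> y\<close>.\<close>
definition tensor_coord :: "('a::field \<Rightarrow> 'a) \<Rightarrow> ('a \<Rightarrow> 'a) \<Rightarrow> 'a" where
  "tensor_coord c h = (\<Sum>y | c y \<noteq> 0. c y * h y)"

lemma tensor_coord_eq_sum:
  assumes "finite S" "{y. c y \<noteq> 0} \<subseteq> S"
  shows "tensor_coord c h = (\<Sum>y\<in>S. c y * h y)"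
  unfolding tensor_coord_def by (rule sum.mono_neutral_left) (use assms in auto)

lemma fsupp_zero [simp]: "fsupp (\<lambda>_. 0)"
  by (simp add: fsupp_def)

lemma fsupp_add: "fsupp (c :: 'a \<Rightarrow> 'b::ab_group_add) \<Longrightarrow> fsupp d \<Longrightarrow> fsupp (\<lambda>z. c z + d z)"
  unfolding fsupp_def by (rule finite_subset[of _ "{z. c z \<noteq> 0} \<union> {z. d z \<noteq> 0}"]) auto

lemma fsupp_diff: "fsupp (c :: 'a \<Rightarrow> 'b::ab_group_add) \<Longrightarrow> fsupp d \<Longrightarrow> fsupp (\<lambda>z. c z - d z)"
  unfolding fsupp_def by (rule finite_subset[of _ "{z. c z \<noteq> 0} \<union> {z. d z \<noteq> 0}"]) auto

lemma fsupp_scale: "fsupp c \<Longrightarrow> fsupp (\<lambda>z. a * c z :: 'a::field)"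
  unfolding fsupp_def by (auto intro: finite_subset[rotated])

lemma tensor_coord_add:
  assumes "fsupp c" "fsupp d"
  shows "tensor_coord (\<lambda>z. c z + d z) h = tensor_coord c h + tensor_coord d h"
proof -
  have S: "finite ({z. c z \<noteq> 0} \<union> {z. d z \<noteq> 0})" using assms unfolding fsupp_def by auto
  show ?thesis by (subst (1 2 3) tensor_coord_eq_sum[OF S]) (auto simp: distrib_right sum.distrib)
qed

lemma tensor_coord_diff:
  assumes "fsupp c" "fsupp d"
  shows "tensor_coord (\<lambda>z. c z - d z) h = tensor_coord c h - tensor_coord d h"
proof -
  have S: "finite ({z. c z \<noteq> 0} \<union> {z. d z \<noteq> 0})" using assms unfolding fsupp_def by auto
  show ?thesis by (subst (1 2 3) tensor_coord_eq_sum[OF S]) (auto simp: left_diff_distrib sum_subtractf)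
qed

lemma tensor_coord_scale: "tensor_coord (\<lambda>z. a * c z) h = a * tensor_coord c h"
  unfolding tensor_coord_def
  by (cases "a = 0") (simp_all add: sum_distrib_left mult.assoc)

lemma tensor_coord_zero [simp]: "tensor_coord (\<lambda>_. 0) h = 0"
  by (simp add: tensor_coord_def)

lemma fsupp_tb: "fsupp (tb y)"
  unfolding fsupp_def tb_def by simp

lemma tensor_coord_tb: "tensor_coord (tb y) h = h y"
  by (simp add: tensor_coord_def tb_def)

lemma fsupp_tzero: "c \<in> tzero K \<Longrightarrow> fsupp c"
  by (induction rule: tzero.induct) (simp_all add: fsupp_add fsupp_diff fsupp_scale fsupp_tb)

lemma tensor_coord_tzero:
  assumes "c \<in> tzero K" "h \<in> Gal K"
  shows "tensor_coord c h = 0"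
  using assms(1)
proof (induction rule: tzero.induct)
  case (tz_add c d)
  then show ?case by (simp add: tensor_coord_add fsupp_tzero)
next
  case (tz_gen_add y y')
  then show ?case
    by (simp add: tensor_coord_diff fsupp_diff fsupp_tb tensor_coord_tb Gal_add[OF assms(2)])
next
  case (tz_gen_scal k y)
  then show ?case
    by (simp add: tensor_coord_diff fsupp_scale fsupp_tb tensor_coord_tb tensor_coord_scale
        Gal_mult[OF assms(2)] Gal_fixes[OF assms(2)])
qed (simp_all add: tensor_coord_scale)

lemma fsupp_sum:
  "finite S \<Longrightarrow> (\<And>x. x \<in> S \<Longrightarrow> fsupp (f x)) \<Longrightarrow> fsupp (\<lambda>z. \<Sum>x\<in>S. f x z :: 'a::field)"
  by (induction S rule: finite_induct) (simp_all add: fsupp_add)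

lemma tensor_coord_sum:
  "finite S \<Longrightarrow> (\<And>x. x \<in> S \<Longrightarrow> fsupp (f x)) \<Longrightarrow>
    tensor_coord (\<lambda>z. \<Sum>x\<in>S. f x z) h = (\<Sum>x\<in>S. tensor_coord (f x) h)"
  by (induction S rule: finite_induct) (simp_all add: tensor_coord_add fsupp_sum)

lemma fsupp_tb_lincomb: "fsupp (\<lambda>z. \<Sum>i<(n::nat). d i * tb (e i) z)"
  by (simp add: fsupp_sum fsupp_scale fsupp_tb)

lemma tensor_coord_tb_lincomb:
  "tensor_coord (\<lambda>z. \<Sum>i<(n::nat). d i * tb (e i) z) h = (\<Sum>i<n. d i * h (e i))"
  by (simp add: tensor_coord_sum fsupp_scale fsupp_tb tensor_coord_scale tensor_coord_tb)

lemma tzero_cong: "c \<in> tzero K \<Longrightarrow> (\<And>z. d z = c z) \<Longrightarrow> d \<in> tzero K"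
  by (metis ext)

lemma tzero_sum:
  assumes "finite S" "\<And>x. x \<in> S \<Longrightarrow> f x \<in> tzero K"
  shows "(\<lambda>z. \<Sum>x\<in>S. f x z) \<in> tzero K"
  using assms
proof (induction S rule: finite_induct)
  case empty
  then show ?case using tzero.tz0 by simp
next
  case (insert x F)
  then have "(\<lambda>z. f x z + (\<Sum>x\<in>F. f x z)) \<in> tzero K" by (intro tzero.tz_add) auto
  with insert.hyps show ?case by simp
qed

lemma tb_lincomb_tzero:
  fixes n :: nat
  assumes "\<forall>i<n. k i \<in> K"
  shows "(\<lambda>z. tb (\<Sum>i<n. k i * e i) z - (\<Sum>i<n. k i * tb (e i) z)) \<in> tzero K"
  using assms
proof (induction n)
  case 0
  have "(\<lambda>z. tb (0 + 0) z - tb 0 z - tb 0 z) \<in> tzero K" by (rule tzero.tz_gen_add)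
  then have "(\<lambda>z. (-1) * (tb (0 + 0) z - tb 0 z - tb 0 z)) \<in> tzero K" by (rule tzero.tz_smult)
  then show ?case by (rule tzero_cong) simp
next
  case (Suc n)
  let ?s = "\<Sum>i<n. k i * e i"
  have "(\<lambda>z. (tb (?s + k n * e n) z - tb ?s z - tb (k n * e n) z)
            + (tb (k n * e n) z - k n * tb (e n) z)
            + (tb ?s z - (\<Sum>i<n. k i * tb (e i) z))) \<in> tzero K"
    using Suc by (intro tzero.tz_add tzero.tz_gen_add tzero.tz_gen_scal) auto
  then show ?case by (rule tzero_cong) (simp add: algebra_simps)
qed

lemma tensor_basis_repr:
  fixes N :: nat
  assumes basis: "\<forall>x. \<exists>k. (\<forall>i<N. k i \<in> K) \<and> x = (\<Sum>i<N. k i * e i)"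
    and c: "fsupp c"
  shows "\<exists>d. (\<lambda>z. c z - (\<Sum>i<N. d i * tb (e i) z)) \<in> tzero K"
proof -
  obtain k where k: "\<And>y. (\<forall>i<N. k y i \<in> K) \<and> y = (\<Sum>i<N. k y i * e i)"
    using basis by metis
  let ?S = "{y. c y \<noteq> 0}"
  have S: "finite ?S" using c by (simp add: fsupp_def)
  define d where "d i = (\<Sum>y\<in>?S. c y * k y i)" for i
  have "(\<lambda>z. \<Sum>y\<in>?S. c y * (tb y z - (\<Sum>i<N. k y i * tb (e i) z))) \<in> tzero K"
  proof (rule tzero_sum[OF S])
    fix y
    have "(\<lambda>z. tb (\<Sum>i<N. k y i * e i) z - (\<Sum>i<N. k y i * tb (e i) z)) \<in> tzero K"
      using k[of y] by (intro tb_lincomb_tzero) auto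
    then show "(\<lambda>z. c y * (tb y z - (\<Sum>i<N. k y i * tb (e i) z))) \<in> tzero K"
      using k[of y] by (intro tzero.tz_smult) simp
  qed
  then have "(\<lambda>z. c z - (\<Sum>i<N. d i * tb (e i) z)) \<in> tzero K"
  proof (rule tzero_cong)
    fix z
    have "(\<Sum>y\<in>?S. c y * tb y z) = c z"
      using S by (simp add: tb_def if_distrib sum.delta' cong: if_cong)
    moreover have "(\<Sum>y\<in>?S. c y * (\<Sum>i<N. k y i * tb (e i) z)) = (\<Sum>i<N. d i * tb (e i) z)"
      unfolding d_def sum_distrib_left sum_distrib_right by (subst sum.swap) (simp add: mult.assoc)
    ultimately show "c z - (\<Sum>i<N. d i * tb (e i) z)
        = (\<Sum>y\<in>?S. c y * (tb y z - (\<Sum>i<N. k y i * tb (e i) z)))"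
      by (simp add: right_diff_distrib sum_subtractf)
  qed
  then show ?thesis by blast
qed

lemma galois_ext_basis:
  "galois_ext K N \<Longrightarrow> \<exists>e. \<forall>x. \<exists>k. (\<forall>i<N. k i \<in> K) \<and> x = (\<Sum>i<N. k i * e i)"
  unfolding galois_ext_def ext_degree_def by metis

lemma galois_ext_finite_Gal:
  assumes "galois_ext K N" shows "finite (Gal K)"
proof -
  obtain e where "\<forall>x. \<exists>k. (\<forall>i<N. k i \<in> K) \<and> x = (\<Sum>i<N. k i * e i)"
    using galois_ext_basis[OF assms] by blast
  then obtain k where "1 = (\<Sum>i<N. k i * e i)" by blast
  then have "N \<noteq> 0" by (cases "N = 0") simp_all
  then show ?thesis using assms unfolding galois_ext_def by (metis card.infinite)
qed

lemma Gal_basis_matrix_rows_independent: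
  fixes N :: nat
  assumes basis: "\<forall>x. \<exists>k. (\<forall>i<N. k i \<in> K) \<and> x = (\<Sum>i<N. k i * e i)"
    and \<sigma>: "inj_on \<sigma> {..<N}" "\<sigma> ` {..<N} \<subseteq> Gal K"
    and rows: "\<forall>i<N. (\<Sum>j<N. l j * \<sigma> j (e i)) = 0"
  shows "\<forall>j<N. l j = 0"
proof -
  have "(\<Sum>j\<in>{..<N}. l j * \<sigma> j x) = 0" for x
  proof -
    obtain k where k: "\<forall>i<N. k i \<in> K" "x = (\<Sum>i<N. k i * e i)" using basis by blast
    have "\<sigma> j x = (\<Sum>i<N. k i * \<sigma> j (e i))" if "j < N" for j
    proof -
      have g: "\<sigma> j \<in> Gal K" using \<sigma>(2) that by auto
      then show ?thesis using k by (simp add: Gal_sum[OF g] Gal_mult[OF g] Gal_fixes[OF g])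
    qed
    then have "(\<Sum>j<N. l j * \<sigma> j x) = (\<Sum>j<N. \<Sum>i<N. k i * (l j * \<sigma> j (e i)))"
      by (simp add: sum_distrib_left mult.left_commute)
    also have "\<dots> = (\<Sum>i<N. k i * (\<Sum>j<N. l j * \<sigma> j (e i)))"
      by (subst sum.swap) (simp add: sum_distrib_left)
    also have "\<dots> = 0" using rows by simp
    finally show ?thesis .
  qed
  then have "\<forall>j\<in>{..<N}. l j = 0" by (intro Gal_linear_independent[OF _ \<sigma>]) auto
  then show ?thesis by simp
qed

lemma tzero_if_tensor_coord_zero:
  assumes gal: "galois_ext K N" and c: "fsupp c" and zero: "\<forall>h\<in>Gal K. tensor_coord c h = 0"
  shows "c \<in> tzero K"
proof -
  obtain e where basis: "\<forall>x. \<exists>k. (\<forall>i<N. k i \<in> K) \<and> x = (\<Sum>i<N. k i * e i)"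
    using galois_ext_basis[OF gal] by blast
  obtain d where d: "(\<lambda>z. c z - (\<Sum>i<N. d i * tb (e i) z)) \<in> tzero K"
    using tensor_basis_repr[OF basis c] by blast
  obtain \<sigma> where \<sigma>: "bij_betw \<sigma> {..<N} (Gal K)"
    using ex_bij_betw_nat_finite[OF galois_ext_finite_Gal[OF gal]] gal
    by (auto simp: galois_ext_def atLeast0LessThan)
  have coord: "(\<Sum>i<N. d i * h (e i)) = 0" if "h \<in> Gal K" for h
    using tensor_coord_tzero[OF d that] zero that
    by (simp add: tensor_coord_diff c fsupp_tb_lincomb tensor_coord_tb_lincomb)
  have "\<forall>i<N. d i = 0"
  proof (rule square_matrix_kernel_trivial[where M = "\<lambda>j i. \<sigma> j (e i)"])
    show "\<forall>j<N. l j = 0" if "\<forall>i<N. (\<Sum>j<N. l j * \<sigma> j (e i)) = 0" for l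
      using Gal_basis_matrix_rows_independent[OF basis _ _ that] \<sigma> by (auto simp: bij_betw_def)
    show "\<forall>j<N. (\<Sum>i<N. \<sigma> j (e i) * d i) = 0"
      using coord \<sigma> by (auto simp: bij_betw_def mult.commute)
  qed
  then show ?thesis using d by (rule_tac tzero_cong) simp_all
qed

lemma teq_iff_tensor_coord:
  assumes gal: "galois_ext K N" and c: "fsupp c" and d: "fsupp d"
  shows "teq K c d \<longleftrightarrow> (\<forall>h\<in>Gal K. tensor_coord c h = tensor_coord d h)"
proof -
  have "tensor_coord (\<lambda>z. c z - d z) h = tensor_coord c h - tensor_coord d h" for h
    using tensor_coord_diff[OF c d] .
  then show ?thesis
    unfolding teq_def using tensor_coord_tzero tzero_if_tensor_coord_zero[OF gal fsupp_diff[OF c d]]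
    by fastforce
qed

lemma supp_idt: "{z. idt f c z \<noteq> 0} \<subseteq> f ` {y. c y \<noteq> 0}"
proof
  fix z assume "z \<in> {z. idt f c z \<noteq> 0}"
  then have "{y. c y \<noteq> 0 \<and> f y = z} \<noteq> {}" unfolding idt_def by force
  then show "z \<in> f ` {y. c y \<noteq> 0}" by auto
qed

lemma fsupp_idt: "fsupp c \<Longrightarrow> fsupp (idt f c)"
  unfolding fsupp_def using supp_idt by (metis finite_imageI finite_subset)

lemma tensor_coord_idt:
  assumes "fsupp c" shows "tensor_coord (idt f c) h = tensor_coord c (h \<circ> f)"
proof -
  let ?S = "{y. c y \<noteq> 0}"
  have S: "finite ?S" using assms by (simp add: fsupp_def)
  have "tensor_coord (idt f c) h = (\<Sum>z\<in>f ` ?S. idt f c z * h z)"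
    by (rule tensor_coord_eq_sum) (use S supp_idt in auto)
  also have "\<dots> = (\<Sum>z\<in>f ` ?S. \<Sum>y\<in>{y\<in>?S. f y = z}. c y * h (f y))"
    unfolding idt_def by (simp add: sum_distrib_right)
  also have "\<dots> = (\<Sum>y\<in>?S. c y * h (f y))"
    using sum.image_gen[OF S, of "\<lambda>y. c y * h (f y)" f] by simp
  finally show ?thesis unfolding tensor_coord_def by simp
qed

lemma tensor_coord_comp_mult:
  "h \<in> Gal K \<Longrightarrow> tensor_coord c (h \<circ> (\<lambda>x. b * x)) = h b * tensor_coord c h"
  unfolding tensor_coord_def by (simp add: Gal_mult sum_distrib_left mult.left_commute)

lemma tensor_coord_comp_gr_act:
  assumes k: "k \<in> Gal K"
  shows "tensor_coord c (k \<circ> gr_act G a) = (\<Sum>g\<in>G. k (a g) * tensor_coord c (k \<circ> g))"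
proof -
  have "tensor_coord c (k \<circ> gr_act G a) = (\<Sum>y | c y \<noteq> 0. \<Sum>g\<in>G. k (a g) * (c y * k (g y)))"
    unfolding tensor_coord_def gr_act_def
    by (simp add: Gal_sum[OF k] Gal_mult[OF k] sum_distrib_left mult.left_commute)
  then show ?thesis
    unfolding tensor_coord_def sum_distrib_left by (subst (asm) sum.swap) simp
qed

section \<open>Eigenvectors of \<open>Id \<otimes> m\<^sub>\<alpha>\<close>\<close>

locale galois_eigenvector =
  fixes K :: "'a::field set" and N :: nat and \<alpha> :: 'a and v :: "'a \<Rightarrow> 'a"
  assumes gal: "galois_ext K N"
    and prim: "primitive_element K \<alpha>"
    and v_fin: "fsupp v"
    and v_nz: "\<not> teq K v (\<lambda>_. 0)"
    and v_eig: "teq K (idt (\<lambda>x. \<alpha> * x) v) (\<lambda>z. \<alpha> * v z)"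
begin

abbreviation vg :: "('a \<Rightarrow> 'a) \<Rightarrow> 'a \<Rightarrow> 'a" where
  "vg g \<equiv> idt (inv g) v"

lemmas teq_iff = teq_iff_tensor_coord[OF gal]

lemma fsupp_vg: "fsupp (vg g)"
  using fsupp_idt[OF v_fin] .

lemma tensor_coord_v_eq_0:
  assumes h: "h \<in> Gal K" "h \<noteq> id"
  shows "tensor_coord v h = 0"
proof -
  have "tensor_coord (idt (\<lambda>x. \<alpha> * x) v) h = tensor_coord (\<lambda>z. \<alpha> * v z) h"
    using v_eig h(1) by (simp add: teq_iff fsupp_idt fsupp_scale v_fin)
  then have "h \<alpha> * tensor_coord v h = \<alpha> * tensor_coord v h"
    by (simp add: tensor_coord_idt v_fin tensor_coord_comp_mult[OF h(1)] tensor_coord_scale)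
  moreover have "h \<alpha> \<noteq> \<alpha>" using Gal_eq_if_eq_on_primitive[OF h(1) id_in_Gal prim] h(2) by auto
  ultimately show ?thesis by simp
qed

lemma tensor_coord_v_id_neq_0: "tensor_coord v id \<noteq> 0"
proof
  assume "tensor_coord v id = 0"
  then have "\<forall>h\<in>Gal K. tensor_coord v h = tensor_coord (\<lambda>_. 0) h"
    using tensor_coord_v_eq_0 by (metis tensor_coord_zero)
  then show False using v_nz by (simp add: teq_iff v_fin)
qed

lemma tensor_coord_vg:
  assumes g: "g \<in> Gal K" and h: "h \<in> Gal K"
  shows "tensor_coord (vg g) h = (if h = g then tensor_coord v id else 0)"
proof -
  have "tensor_coord (vg g) h = tensor_coord v (h \<circ> inv g)" by (simp add: tensor_coord_idt v_fin)
  moreover have "h \<circ> inv g \<in> Gal K" using Gal_comp[OF h Gal_inv[OF g]] .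
  moreover have "h \<circ> inv g = id \<longleftrightarrow> h = g" using comp_inv_eq_id_iff[OF Gal_bij[OF g]] .
  ultimately show ?thesis using tensor_coord_v_eq_0 by (cases "h = g") auto
qed

lemma tensor_coord_tlc_vg:
  assumes h: "h \<in> Gal K"
  shows "tensor_coord (tlc (Gal K) c vg) h = c h * tensor_coord v id"
proof -
  have "tensor_coord (tlc (Gal K) c vg) h = (\<Sum>g\<in>Gal K. c g * tensor_coord (vg g) h)"
    unfolding tlc_def using galois_ext_finite_Gal[OF gal]
    by (simp add: tensor_coord_sum fsupp_scale fsupp_vg tensor_coord_scale)
  also have "\<dots> = c h * tensor_coord v id"
    using h galois_ext_finite_Gal[OF gal] by (simp add: tensor_coord_vg if_distrib sum.delta' cong: if_cong)
  finally show ?thesis .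
qed

lemma fsupp_tlc_vg: "fsupp (tlc (Gal K) c vg)"
  unfolding tlc_def using galois_ext_finite_Gal[OF gal] by (simp add: fsupp_sum fsupp_scale fsupp_vg)

lemma vg_nonzero: "g \<in> Gal K \<Longrightarrow> \<not> teq K (vg g) (\<lambda>_. 0)"
  using tensor_coord_vg[of g g] tensor_coord_v_id_neq_0
  by (auto simp: teq_iff fsupp_vg intro!: bexI[of _ g])

lemma vg_eigenvector: "g \<in> Gal K \<Longrightarrow> teq K (idt (\<lambda>x. \<alpha> * x) (vg g)) (\<lambda>z. g \<alpha> * vg g z)"
  by (simp add: teq_iff fsupp_idt fsupp_scale fsupp_vg tensor_coord_idt tensor_coord_scale
      tensor_coord_comp_mult tensor_coord_vg)

lemma idt_Gal_vg:
  assumes g: "g \<in> Gal K" and h: "h \<in> Gal K"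
  shows "teq K (idt g (vg h)) (vg (h \<circ> inv g))"
proof -
  have "inv (h \<circ> inv g) = g \<circ> inv h"
    using Gal_bij[OF g] Gal_bij[OF h] by (simp add: o_inv_distrib bij_imp_bij_inv inv_inv_eq)
  then show ?thesis
    by (simp add: teq_iff fsupp_idt fsupp_vg tensor_coord_idt v_fin o_assoc)
qed

lemma vg_basis:
  assumes w: "fsupp w"
  shows "\<exists>!c. grp_elem (Gal K) c \<and> teq K w (tlc (Gal K) c vg)"
proof -
  have coords: "teq K w (tlc (Gal K) c vg) \<longleftrightarrow> (\<forall>h\<in>Gal K. tensor_coord w h = c h * tensor_coord v id)"
    for c by (simp add: teq_iff w fsupp_tlc_vg tensor_coord_tlc_vg)
  let ?c = "\<lambda>g. if g \<in> Gal K then tensor_coord w g / tensor_coord v id else 0"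
  show ?thesis
  proof
    show "grp_elem (Gal K) ?c \<and> teq K w (tlc (Gal K) ?c vg)"
      unfolding coords grp_elem_def using tensor_coord_v_id_neq_0 by simp
  next
    fix c assume "grp_elem (Gal K) c \<and> teq K w (tlc (Gal K) c vg)"
    then show "c = ?c"
      unfolding coords grp_elem_def using tensor_coord_v_id_neq_0 by (auto simp: field_simps)
  qed
qed

lemma idt_gr_act_vg:
  assumes h: "h \<in> Gal K"
  shows "teq K (idt (gr_act (Gal K) a) (vg h)) (tlc (Gal K) (dickson (Gal K) a h) vg)"
  unfolding teq_iff[OF fsupp_idt[OF fsupp_vg] fsupp_tlc_vg]
proof
  fix k assume k: "k \<in> Gal K"
  have "tensor_coord (idt (gr_act (Gal K) a) (vg h)) k
      = (\<Sum>g\<in>Gal K. k (a g) * tensor_coord (vg h) (k \<circ> g))"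
    by (simp add: tensor_coord_idt fsupp_vg tensor_coord_comp_gr_act[OF k])
  also have "\<dots> = (\<Sum>g\<in>Gal K. if g = inv k \<circ> h then k (a g) * tensor_coord v id else 0)"
    by (intro sum.cong refl)
      (simp add: tensor_coord_vg[OF h Gal_comp[OF k]] comp_eq_iff_eq_inv_comp[OF Gal_bij[OF k]])
  also have "\<dots> = k (a (inv k \<circ> h)) * tensor_coord v id"
    using galois_ext_finite_Gal[OF gal] Gal_comp[OF Gal_inv[OF k] h] by simp
  finally show "tensor_coord (idt (gr_act (Gal K) a) (vg h)) k
      = tensor_coord (tlc (Gal K) (dickson (Gal K) a h) vg) k"
    by (simp add: tensor_coord_tlc_vg k dickson_def)
qed

end

section \<open>The skew group ring\<close>

lemma gr_mult_scale_left: "gr_mult G (\<lambda>k. c * f k) a = (\<lambda>k. c * gr_mult G f a k)"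
  unfolding gr_mult_def by (simp add: sum_distrib_left if_distrib mult.assoc cong: if_cong)

lemma gr_mult_basis_left:
  assumes fin: "finite (Gal K)" and h: "h \<in> Gal K"
  shows "gr_mult (Gal K) (gr_basis h) a = (\<lambda>k. if k \<in> Gal K then dickson (Gal K) a k h else 0)"
proof
  fix k
  have "gr_mult (Gal K) (gr_basis h) a k
      = (\<Sum>g\<in>Gal K. if g = h then (\<Sum>h'\<in>Gal K. if h \<circ> h' = k then h (a h') else 0) else 0)"
    unfolding gr_mult_def gr_basis_def by (intro sum.cong refl) (auto cong: if_cong)
  also have "\<dots> = (\<Sum>h'\<in>Gal K. if h \<circ> h' = k then h (a h') else 0)"
    using fin h by simp
  also have "\<dots> = (if k \<in> Gal K then dickson (Gal K) a k h else 0)"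
  proof -
    have solve: "h \<circ> h' = k \<longleftrightarrow> h' = inv h \<circ> k" for h'
      using comp_eq_iff_eq_inv_comp[OF Gal_bij[OF h]] .
    moreover have "inv h \<circ> k \<in> Gal K \<longleftrightarrow> k \<in> Gal K"
      using Gal_comp[OF Gal_inv[OF h], of k] Gal_comp[OF h, of "inv h \<circ> k"] solve[of "inv h \<circ> k"]
      by auto
    ultimately show ?thesis using fin by (simp add: dickson_def)
  qed
  finally show "gr_mult (Gal K) (gr_basis h) a k = (if k \<in> Gal K then dickson (Gal K) a k h else 0)" .
qed

theorem mainTheorem7:
  fixes K :: "'a::field set" and N :: nat and \<alpha> :: 'a and v :: "'a \<Rightarrow> 'a"
  assumes gal: "galois_ext K N"
    and prim: "primitive_element K \<alpha>"
    and v_fin: "fsupp v"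
    and v_nz: "\<not> teq K v (\<lambda>_. 0)"
    and v_eig: "teq K (idt (\<lambda>x. \<alpha> * x) v) (\<lambda>z. \<alpha> * v z)"
  defines "G \<equiv> Gal K"
    and "vg \<equiv> (\<lambda>g. idt (inv g) v)"
  shows
    "(\<forall>g\<in>G. \<not> teq K (vg g) (\<lambda>_. 0) \<and>
             teq K (idt (\<lambda>x. \<alpha> * x) (vg g)) (\<lambda>z. g \<alpha> * vg g z))
   \<and> (\<forall>g\<in>G. \<forall>h\<in>G. teq K (idt g (vg h)) (vg (h \<circ> inv g)))
   \<and> (\<forall>w. fsupp w \<longrightarrow> (\<exists>!c. grp_elem G c \<and> teq K w (tlc G c vg)))
   \<and> (\<forall>a. grp_elem G a \<longrightarrow>
        (\<forall>h\<in>G. teq K (idt (gr_act G a) (vg h)) (tlc G (\<lambda>g. dickson G a h g) vg)))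
   \<and> (\<forall>a. grp_elem G a \<longrightarrow>
        (\<forall>c f. grp_elem G f \<longrightarrow> gr_mult G (\<lambda>k. c * f k) a = (\<lambda>k. c * gr_mult G f a k))
      \<and> (\<forall>h\<in>G. gr_mult G (gr_basis h) a = (\<lambda>g. if g \<in> G then dickson G a g h else 0)))"
proof -
  interpret galois_eigenvector K N \<alpha> v
    using assms by unfold_locales
  show ?thesis
    unfolding G_def vg_def
    using vg_nonzero vg_eigenvector idt_Gal_vg vg_basis idt_gr_act_vg
      gr_mult_basis_left[OF galois_ext_finite_Gal[OF gal]]
    by (simp add: gr_mult_scale_left)
qed

end
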